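(* Let $a,b$ be smooth real functions of one variable and $f(x,y)=a(x)x+b(x)y$. On any open set $U\subset\mathbb{R}^2$ on which the three foliations given by the level curves $x=\text{const}$, $y=\text{const}$ and $f(x,y)=\text{const}$ form a 3-web (i.e. are pairwise transversal), this 3-web is linearizable: near every point of $U$ there is a local diffeomorphism onto an open subset of $\mathbb{R}^2$ carrying the leaves of all three foliations onto (open pieces of) straight lines.
   Context: A 3-web on a 2-dimensional manifold is given by three foliations by smooth curves in general position (pairwise transversal). A 3-web is linear if all three foliations consist of straight lines; it is linearizable if it is locally equivalent to a linear web via a local diffeomorphism. *)

theory Defs
  imports "HOL-Analysis.Analysis"
begin

fun higher_differentiable_on ::
  "'a::real_normed_vector set \<Rightarrow> ('a \<Rightarrow> 'b::real_normed_vector) \<Rightarrow> nat \<Rightarrow> bool" where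
  "higher_differentiable_on S f 0 = continuous_on S f"
| "higher_differentiable_on S f (Suc n) =
     (f differentiable_on S \<and>
      (\<forall>v. higher_differentiable_on S (\<lambda>x. frechet_derivative f (at x) v) n))"

definition smooth_on :: "'a::real_normed_vector set \<Rightarrow> ('a \<Rightarrow> 'b::real_normed_vector) \<Rightarrow> bool" where
  "smooth_on S f \<longleftrightarrow> (\<forall>n. higher_differentiable_on S f n)"

definition diffeo_between :: "('a::real_normed_vector \<Rightarrow> 'a) \<Rightarrow> 'a set \<Rightarrow> 'a set \<Rightarrow> bool" where
  "diffeo_between \<phi> V W \<longleftrightarrow> open V \<and> open W \<and> \<phi> ` V = W \<and> smooth_on V \<phi> \<and>
     (\<exists>\<psi>. smooth_on W \<psi> \<and> (\<forall>q\<in>V. \<psi> (\<phi> q) = q) \<and> (\<forall>w\<in>W. \<phi> (\<psi> w) = w))"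

definition is_line :: "(real \<times> real) set \<Rightarrow> bool" where
  "is_line L \<longleftrightarrow> (\<exists>p v. v \<noteq> 0 \<and> L = {p + t *\<^sub>R v | t. True})"

definition dx :: "(real \<times> real \<Rightarrow> real) \<Rightarrow> real \<times> real \<Rightarrow> real" where
  "dx g p = frechet_derivative g (at p) (1, 0)"
definition dy :: "(real \<times> real \<Rightarrow> real) \<Rightarrow> real \<times> real \<Rightarrow> real" where
  "dy g p = frechet_derivative g (at p) (0, 1)"

definition transversal_at :: "(real \<times> real \<Rightarrow> real) \<Rightarrow> (real \<times> real \<Rightarrow> real) \<Rightarrow> real \<times> real \<Rightarrow> bool" where
  "transversal_at g h p \<longleftrightarrow> g differentiable (at p) \<and> h differentiable (at p) \<and>
     dx g p * dy h p - dy g p * dx h p \<noteq> 0"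

definition three_web :: "(real \<times> real) set \<Rightarrow> (real \<times> real \<Rightarrow> real) \<Rightarrow> (real \<times> real \<Rightarrow> real)
    \<Rightarrow> (real \<times> real \<Rightarrow> real) \<Rightarrow> bool" where
  "three_web U g1 g2 g3 \<longleftrightarrow> open U \<and>
     (\<forall>p\<in>U. transversal_at g1 g2 p \<and> transversal_at g1 g3 p \<and> transversal_at g2 g3 p)"

definition linearizable_web :: "(real \<times> real) set \<Rightarrow> (real \<times> real \<Rightarrow> real) \<Rightarrow> (real \<times> real \<Rightarrow> real)
    \<Rightarrow> (real \<times> real \<Rightarrow> real) \<Rightarrow> bool" where
  "linearizable_web U g1 g2 g3 \<longleftrightarrow>
     (\<forall>p\<in>U. \<exists>V W \<phi>. p \<in> V \<and> V \<subseteq> U \<and> diffeo_between \<phi> V W \<and>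
        (\<forall>g\<in>{g1, g2, g3}. \<forall>c. \<exists>L. is_line L \<and> \<phi> ` {q\<in>V. g q = c} \<subseteq> L))"

end

theory Submission
  imports Defs
begin

text \<open>Put \<open>f(x,y) = a(x) x + b(x) y\<close> and use the chart \<open>\<phi>(x,y) = (f(x,y), y)\<close>. It sends the
  leaves \<open>y = c\<close> to horizontal lines and the leaves \<open>f = c\<close> to vertical lines; since \<open>f\<close> is
  affine in \<open>y\<close>, the leaf \<open>x = c\<close>, parametrised by \<open>y = t\<close>, goes to the line
  \<open>t \<mapsto> (a(c) c + b(c) t, t)\<close>. Transversality of the last two foliations means \<open>\<partial>f/\<partial>x \<noteq> 0\<close>,
  so by Rolle's theorem \<open>\<phi>\<close> is injective on every ball in \<open>U\<close>; its image is open by invariance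
  of domain, and its inverse is smooth.\<close>

section \<open>Calculus of higher differentiability\<close>

lemma higher_differentiable_on_SucD:
  "higher_differentiable_on S f (Suc n) \<Longrightarrow> higher_differentiable_on S f n"
proof (induction n arbitrary: f)
  case 0
  then show ?case by (simp add: differentiable_imp_continuous_on)
next
  case (Suc n)
  have "f differentiable_on S"
    and "higher_differentiable_on S (\<lambda>x. frechet_derivative f (at x) v) (Suc n)" for v
    using Suc.prems by simp_all
  then show ?case using Suc.IH by (simp only: higher_differentiable_on.simps) blast
qed

lemma higher_differentiable_on_has_derivative:
  assumes "open S" "higher_differentiable_on S f (Suc n)" "x \<in> S"
  shows "(f has_derivative frechet_derivative f (at x)) (at x)"
  using assms
  by (metis differentiable_on_eq_differentiable_at frechet_derivative_works
      higher_differentiable_on.simps(2))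

lemma higher_differentiable_on_subset:
  assumes "T \<subseteq> S"
  shows "higher_differentiable_on S f n \<Longrightarrow> higher_differentiable_on T f n"
proof (induction n arbitrary: f)
  case 0
  then show ?case using continuous_on_subset[OF _ assms] by simp
next
  case (Suc n)
  then show ?case using differentiable_on_subset[OF _ assms] by auto
qed

lemma higher_differentiable_on_cong:
  assumes "open S" "\<And>x. x \<in> S \<Longrightarrow> f x = g x" "higher_differentiable_on S f n"
  shows "higher_differentiable_on S g n"
  using assms(2,3)
proof (induction n arbitrary: f g)
  case 0
  then show ?case using continuous_on_cong by force
next
  case (Suc n)
  have df: "f differentiable_on S" using Suc.prems by simp
  have "(g has_derivative frechet_derivative f (at x)) (at x)" if "x \<in> S" for x
    by (rule has_derivative_transform_within_open[OF
          higher_differentiable_on_has_derivative[OF assms(1) Suc.prems(2) that] assms(1) that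
          Suc.prems(1)])
  then have dg: "g differentiable_on S"
    by (meson differentiableI differentiable_at_imp_differentiable_on)
  have "higher_differentiable_on S (\<lambda>x. frechet_derivative g (at x) v) n" for v
  proof (rule Suc.IH)
    show "higher_differentiable_on S (\<lambda>x. frechet_derivative f (at x) v) n"
      using Suc.prems by simp
    show "frechet_derivative f (at x) v = frechet_derivative g (at x) v" if "x \<in> S" for x
      using frechet_derivative_transform_within_open[of f x S g] df assms(1) Suc.prems(1) that
      by (simp add: differentiable_on_eq_differentiable_at)
  qed
  with dg show ?case by simp
qed

lemma higher_differentiable_on_SucI:
  assumes "open S" "\<And>x. x \<in> S \<Longrightarrow> (f has_derivative f' x) (at x)"
    "\<And>v. higher_differentiable_on S (\<lambda>x. f' x v) n"
  shows "higher_differentiable_on S f (Suc n)"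
proof -
  have "f differentiable_on S"
    using assms(2) by (meson differentiableI differentiable_at_imp_differentiable_on)
  moreover have "higher_differentiable_on S (\<lambda>x. frechet_derivative f (at x) v) n" for v
    by (rule higher_differentiable_on_cong[OF assms(1) _ assms(3)[of v]])
      (metis assms(2) frechet_derivative_at)
  ultimately show ?thesis by simp
qed

lemma higher_differentiable_on_const:
  assumes "open S"
  shows "higher_differentiable_on S (\<lambda>x. c) n"
proof (induction n arbitrary: c)
  case 0
  then show ?case by simp
next
  case (Suc n)
  show ?case by (rule higher_differentiable_on_SucI[OF assms has_derivative_const Suc.IH])
qed

lemma higher_differentiable_on_bounded_linear:
  assumes "open S" "bounded_linear L"
  shows "higher_differentiable_on S L n"
proof (cases n)
  case 0
  then show ?thesis using assms(2) by (simp add: linear_continuous_on)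
next
  case (Suc m)
  show ?thesis unfolding Suc
    by (rule higher_differentiable_on_SucI[where f'="\<lambda>x. L", OF assms(1)
          bounded_linear_imp_has_derivative[OF assms(2)] higher_differentiable_on_const[OF assms(1)]])
qed

lemma higher_differentiable_on_add:
  assumes "open S"
  shows "higher_differentiable_on S f n \<Longrightarrow> higher_differentiable_on S g n \<Longrightarrow>
    higher_differentiable_on S (\<lambda>x. f x + g x) n"
proof (induction n arbitrary: f g)
  case 0
  then show ?case by (simp add: continuous_on_add)
next
  case (Suc n)
  show ?case
  proof (rule higher_differentiable_on_SucI[OF assms,
        where f'="\<lambda>x v. frechet_derivative f (at x) v + frechet_derivative g (at x) v"])
    show "((\<lambda>x. f x + g x) has_derivative
        (\<lambda>v. frechet_derivative f (at x) v + frechet_derivative g (at x) v)) (at x)" if "x \<in> S" for x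
      using has_derivative_add[OF higher_differentiable_on_has_derivative[OF assms Suc.prems(1) that]
          higher_differentiable_on_has_derivative[OF assms Suc.prems(2) that]] .
    show "higher_differentiable_on S
        (\<lambda>x. frechet_derivative f (at x) v + frechet_derivative g (at x) v) n" for v
      using Suc.prems by (intro Suc.IH) simp_all
  qed
qed

lemma higher_differentiable_on_scaleR:
  fixes f :: "_ \<Rightarrow> real"
  assumes "open S"
  shows "higher_differentiable_on S f n \<Longrightarrow> higher_differentiable_on S g n \<Longrightarrow>
    higher_differentiable_on S (\<lambda>x. f x *\<^sub>R g x) n"
proof (induction n arbitrary: f g)
  case 0
  then show ?case by (simp add: continuous_on_scaleR)
next
  case (Suc n)
  show ?case
  proof (rule higher_differentiable_on_SucI[OF assms, where f'="\<lambda>x v.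
        f x *\<^sub>R frechet_derivative g (at x) v + frechet_derivative f (at x) v *\<^sub>R g x"])
    show "((\<lambda>x. f x *\<^sub>R g x) has_derivative (\<lambda>v.
        f x *\<^sub>R frechet_derivative g (at x) v + frechet_derivative f (at x) v *\<^sub>R g x)) (at x)"
      if "x \<in> S" for x
      using has_derivative_scaleR[OF higher_differentiable_on_has_derivative[OF assms Suc.prems(1) that]
          higher_differentiable_on_has_derivative[OF assms Suc.prems(2) that]] .
    show "higher_differentiable_on S (\<lambda>x.
        f x *\<^sub>R frechet_derivative g (at x) v + frechet_derivative f (at x) v *\<^sub>R g x) n" for v
      using Suc.prems
      by (intro higher_differentiable_on_add[OF assms] Suc.IH)
        (simp_all add: higher_differentiable_on_SucD)
  qed
qed

lemma higher_differentiable_on_diff: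
  assumes "open S" "higher_differentiable_on S f n" "higher_differentiable_on S g n"
  shows "higher_differentiable_on S (\<lambda>x. f x - g x) n"
  using higher_differentiable_on_add[OF assms(1,2) higher_differentiable_on_scaleR[OF assms(1)
        higher_differentiable_on_const[OF assms(1), of "-1"] assms(3)]]
  by simp

lemma higher_differentiable_on_mult:
  fixes f g :: "_ \<Rightarrow> real"
  shows "open S \<Longrightarrow> higher_differentiable_on S f n \<Longrightarrow> higher_differentiable_on S g n \<Longrightarrow>
    higher_differentiable_on S (\<lambda>x. f x * g x) n"
  using higher_differentiable_on_scaleR[of S f n g] by simp

lemma higher_differentiable_on_bounded_linear_compose:
  assumes "open S" "bounded_linear L"
  shows "higher_differentiable_on S f n \<Longrightarrow> higher_differentiable_on S (\<lambda>x. L (f x)) n"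
proof (induction n arbitrary: f)
  case 0
  then show ?case
    using assms(2) by (simp add: continuous_on_compose2[of UNIV L S f] linear_continuous_on)
next
  case (Suc n)
  show ?case
  proof (rule higher_differentiable_on_SucI[OF assms(1),
        where f'="\<lambda>x v. L (frechet_derivative f (at x) v)"])
    show "((\<lambda>x. L (f x)) has_derivative (\<lambda>v. L (frechet_derivative f (at x) v))) (at x)"
      if "x \<in> S" for x
      by (rule bounded_linear.has_derivative[OF assms(2)
            higher_differentiable_on_has_derivative[OF assms(1) Suc.prems that]])
    show "higher_differentiable_on S (\<lambda>x. L (frechet_derivative f (at x) v)) n" for v
      using Suc.prems by (intro Suc.IH) simp
  qed
qed

lemma higher_differentiable_on_Pair:
  assumes "open S"
  shows "higher_differentiable_on S f n \<Longrightarrow> higher_differentiable_on S g n \<Longrightarrow>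
    higher_differentiable_on S (\<lambda>x. (f x, g x)) n"
proof (induction n arbitrary: f g)
  case 0
  then show ?case by (simp add: continuous_on_Pair)
next
  case (Suc n)
  show ?case
  proof (rule higher_differentiable_on_SucI[OF assms,
        where f'="\<lambda>x v. (frechet_derivative f (at x) v, frechet_derivative g (at x) v)"])
    show "((\<lambda>x. (f x, g x)) has_derivative
        (\<lambda>v. (frechet_derivative f (at x) v, frechet_derivative g (at x) v))) (at x)" if "x \<in> S" for x
      using has_derivative_Pair[OF higher_differentiable_on_has_derivative[OF assms Suc.prems(1) that]
          higher_differentiable_on_has_derivative[OF assms Suc.prems(2) that]] .
    show "higher_differentiable_on S
        (\<lambda>x. (frechet_derivative f (at x) v, frechet_derivative g (at x) v)) n" for v
      using Suc.prems by (intro Suc.IH) simp_all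
  qed
qed

lemma higher_differentiable_on_sum:
  assumes "open S" "finite I" "\<And>i. i \<in> I \<Longrightarrow> higher_differentiable_on S (f i) n"
  shows "higher_differentiable_on S (\<lambda>x. \<Sum>i\<in>I. f i x) n"
  using assms(2,3)
  by (induction I rule: finite_induct)
    (simp_all add: higher_differentiable_on_const higher_differentiable_on_add assms(1))

lemma linear_eq_sum_Basis:
  fixes w :: "'a::euclidean_space"
  assumes "linear L"
  shows "L w = (\<Sum>i\<in>Basis. (w \<bullet> i) *\<^sub>R L i)"
proof -
  have "L w = L (\<Sum>i\<in>Basis. (w \<bullet> i) *\<^sub>R i)" by (simp add: euclidean_representation)
  also have "\<dots> = (\<Sum>i\<in>Basis. (w \<bullet> i) *\<^sub>R L i)"
    using assms by (simp add: linear_sum linear_scale)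
  finally show ?thesis .
qed

text \<open>The chain rule is written in coordinates of the intermediate space, so that each
  summand is a product of a scalar and a vector function to which the induction hypothesis
  applies.\<close>

lemma higher_differentiable_on_compose:
  fixes h :: "'a::euclidean_space \<Rightarrow> 'b::real_normed_vector"
  assumes "open S" "open T" "f ` S \<subseteq> T"
  shows "higher_differentiable_on T h n \<Longrightarrow> higher_differentiable_on S f n \<Longrightarrow>
    higher_differentiable_on S (\<lambda>x. h (f x)) n"
proof (induction n arbitrary: h)
  case 0
  then have "continuous_on T h" "continuous_on S f" by simp_all
  then have "continuous_on S (\<lambda>x. h (f x))"
    by (rule continuous_on_compose2[of T h S f, OF _ _ assms(3)])
  then show ?case by simp
next
  case (Suc n)
  let ?D = "\<lambda>x v. \<Sum>i\<in>Basis.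
    (frechet_derivative f (at x) v \<bullet> i) *\<^sub>R frechet_derivative h (at (f x)) i"
  show ?case
  proof (rule higher_differentiable_on_SucI[OF assms(1), where f'="?D"])
    fix x assume x: "x \<in> S"
    have df: "(f has_derivative frechet_derivative f (at x)) (at x)"
      using higher_differentiable_on_has_derivative[OF assms(1) Suc.prems(2) x] .
    have dh: "(h has_derivative frechet_derivative h (at (f x))) (at (f x))"
      using higher_differentiable_on_has_derivative[OF assms(2) Suc.prems(1)] assms(3) x by blast
    have "frechet_derivative h (at (f x)) \<circ> frechet_derivative f (at x) = ?D x"
      by (rule ext)
        (simp only: o_def linear_eq_sum_Basis[OF has_derivative_linear[OF dh],
          of "frechet_derivative f (at x) _"])
    with diff_chain_at[OF df dh] show "((\<lambda>x. h (f x)) has_derivative ?D x) (at x)"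
      by (simp add: o_def)
  next
    fix v
    have "higher_differentiable_on S
        (\<lambda>x. (frechet_derivative f (at x) v \<bullet> i) *\<^sub>R frechet_derivative h (at (f x)) i) n" for i
    proof (rule higher_differentiable_on_scaleR[OF assms(1)])
      show "higher_differentiable_on S (\<lambda>x. frechet_derivative f (at x) v \<bullet> i) n"
        using Suc.prems(2)
        by (intro higher_differentiable_on_bounded_linear_compose[OF assms(1)
              bounded_linear_inner_left]) simp
      show "higher_differentiable_on S (\<lambda>x. frechet_derivative h (at (f x)) i) n"
        by (rule Suc.IH) (use Suc.prems in \<open>simp_all add: higher_differentiable_on_SucD\<close>)
    qed
    then show "higher_differentiable_on S (\<lambda>x. ?D x v) n"
      by (intro higher_differentiable_on_sum[OF assms(1) finite_Basis])
  qed
qed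

lemma higher_differentiable_on_inverse:
  "higher_differentiable_on (- {0}) (inverse :: real \<Rightarrow> real) n"
proof (induction n)
  case 0
  have "continuous_on (- {0}) (\<lambda>x :: real. inverse x)" by (intro continuous_intros) auto
  then show ?case by simp
next
  case (Suc n)
  have S: "open (- {0 :: real})" by (simp add: open_Compl)
  show ?case
  proof (rule higher_differentiable_on_SucI[OF S, where f'="\<lambda>x v. (- v) * (inverse x * inverse x)"])
    fix x :: real assume "x \<in> - {0}"
    then have "(inverse has_derivative (\<lambda>h. - (inverse x * h * inverse x))) (at x)"
      by (simp add: has_derivative_inverse')
    then show "(inverse has_derivative (\<lambda>v. (- v) * (inverse x * inverse x))) (at x)"
      by (simp add: algebra_simps)
  next
    have "higher_differentiable_on (- {0}) (\<lambda>x :: real. inverse x * inverse x) n"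
      using higher_differentiable_on_mult[OF S Suc Suc] by simp
    then show "higher_differentiable_on (- {0}) (\<lambda>x :: real. (- v) * (inverse x * inverse x)) n"
      for v using higher_differentiable_on_mult[OF S higher_differentiable_on_const[OF S]] by blast
  qed
qed

section \<open>Charts of the form \<open>(x, y) \<mapsto> (F(x, y), y)\<close>\<close>

lemma dx_snd: "dx snd q = 0" and dy_snd: "dy snd q = 1"
proof -
  have "frechet_derivative snd (at q) = snd"
    by (rule frechet_derivative_at[symmetric])
      (rule bounded_linear_imp_has_derivative[OF bounded_linear_snd])
  then show "dx snd q = 0" "dy snd q = 1" by (simp_all add: dx_def dy_def)
qed

lemma frechet_derivative_plane:
  fixes F :: "real \<times> real \<Rightarrow> real"
  assumes "F differentiable (at q)"
  shows "frechet_derivative F (at q) (s, t) = s * dx F q + t * dy F q"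
proof -
  have L: "linear (frechet_derivative F (at q))"
    using assms frechet_derivative_works has_derivative_linear by blast
  have "frechet_derivative F (at q) (s, t) =
      frechet_derivative F (at q) (s *\<^sub>R (1, 0) + t *\<^sub>R (0, 1))"
    by simp
  also have "\<dots> = s * dx F q + t * dy F q"
    by (simp only: linear_add[OF L] linear_scale[OF L]) (simp add: dx_def dy_def)
  finally show ?thesis .
qed

lemma convex_horizontal_slice:
  fixes V :: "(real \<times> real) set"
  assumes "convex V"
  shows "convex {t. (t, y) \<in> V}"
proof (rule convexI)
  fix x x' u v :: real
  assume xV: "x \<in> {t. (t, y) \<in> V}" "x' \<in> {t. (t, y) \<in> V}" and uv: "0 \<le> u" "0 \<le> v" "u + v = 1"
  have "u *\<^sub>R (x, y) + v *\<^sub>R (x', y) \<in> V" using xV by (intro convexD[OF assms _ _ uv]) simp_all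
  moreover have "u * y + v * y = y" by (metis uv(3) distrib_right mult_1)
  ultimately show "u *\<^sub>R x + v *\<^sub>R x' \<in> {t. (t, y) \<in> V}" by simp
qed

lemma inj_on_Pair_snd:
  fixes F :: "real \<times> real \<Rightarrow> real"
  assumes "convex V" "\<And>q. q \<in> V \<Longrightarrow> F differentiable (at q)" "\<And>q. q \<in> V \<Longrightarrow> dx F q \<noteq> 0"
  shows "inj_on (\<lambda>q. (F q, snd q)) V"
proof -
  have der: "((\<lambda>t. F (t, y)) has_derivative (\<lambda>h. h * dx F (t, y))) (at t)" if "(t, y) \<in> V" for t y
  proof -
    have "((\<lambda>t. (t, y)) has_derivative (\<lambda>h. (h, 0))) (at t)"
      by (auto intro!: derivative_eq_intros)
    from diff_chain_at[OF this frechet_derivative_works[THEN iffD1, OF assms(2)[OF that]]]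
    show ?thesis by (simp add: o_def frechet_derivative_plane[OF assms(2)[OF that]])
  qed
  have no_double: False
    if "x1 < x2" "(x1, y) \<in> V" "(x2, y) \<in> V" "F (x1, y) = F (x2, y)" for x1 x2 y
  proof -
    have "is_interval {t. (t, y) \<in> V}"
      using convex_horizontal_slice[OF assms(1)] by (simp add: is_interval_convex_1)
    then have slice: "(t, y) \<in> V" if "x1 \<le> t" "t \<le> x2" for t
      using that \<open>(x1, y) \<in> V\<close> \<open>(x2, y) \<in> V\<close> unfolding is_interval_1 by blast
    have "continuous_on {x1..x2} (\<lambda>t. F (t, y))"
    proof (rule continuous_at_imp_continuous_on, rule ballI)
      fix t assume "t \<in> {x1..x2}"
      then show "isCont (\<lambda>t. F (t, y)) t"
        using has_derivative_continuous[OF der[OF slice]] by simp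
    qed
    then have "\<exists>z. x1 < z \<and> z < x2 \<and> (\<lambda>h. h * dx F (z, y)) = (\<lambda>h. 0)"
      by (rule Rolle_deriv[OF that(1,4)]) (rule der, rule slice, auto)
    then obtain z where z: "x1 < z" "z < x2" "dx F (z, y) = 0"
      by (metis mult_1)
    show False
      using assms(3)[OF slice[of z]] z by simp
  qed
  show ?thesis
  proof (rule inj_onI, clarsimp)
    fix x1 x2 y assume "(x1, y) \<in> V" "(x2, y) \<in> V" "F (x1, y) = F (x2, y)"
    then show "x1 = x2"
      by (cases x1 x2 rule: linorder_cases) (auto intro: no_double)
  qed
qed

text \<open>The inverse of the chart has the derivative of the inverse of
  \<open>(s, t) \<mapsto> (s dx F + t dy F, t)\<close>.\<close>

lemma has_derivative_inverse_Pair_snd: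
  fixes F :: "real \<times> real \<Rightarrow> real"
  assumes "open V" "continuous_on V (\<lambda>q. (F q, snd q))" "\<And>q. q \<in> V \<Longrightarrow> \<psi> (F q, snd q) = q"
    "\<psi> w \<in> V" "(F (\<psi> w), snd (\<psi> w)) = w" "F differentiable (at (\<psi> w))" "dx F (\<psi> w) \<noteq> 0"
  shows "(\<psi> has_derivative
    (\<lambda>k. (inverse (dx F (\<psi> w)) * (fst k - snd k * dy F (\<psi> w)), snd k))) (at w)"
proof (rule has_derivative_inverse_strong_x[OF assms(1,4,2,3) _ _ assms(5)])
  show "((\<lambda>q. (F q, snd q)) has_derivative (\<lambda>h. (frechet_derivative F (at (\<psi> w)) h, snd h)))
      (at (\<psi> w))"
    using assms(6) by (auto intro!: derivative_eq_intros simp: frechet_derivative_works)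
  show "(\<lambda>h. (frechet_derivative F (at (\<psi> w)) h, snd h)) \<circ>
      (\<lambda>k. (inverse (dx F (\<psi> w)) * (fst k - snd k * dy F (\<psi> w)), snd k)) = id"
    using assms(7) by (auto simp: fun_eq_iff frechet_derivative_plane[OF assms(6)] field_simps)
qed

text \<open>Smoothness of the inverse bootstraps: its derivative is a smooth function of the
  partial derivatives of \<open>F\<close> composed with the inverse itself.\<close>

lemma smooth_on_inverse_Pair_snd:
  fixes F :: "real \<times> real \<Rightarrow> real"
  assumes "smooth_on V F" "open V" "open W" "\<psi> ` W \<subseteq> V" "\<And>q. q \<in> V \<Longrightarrow> dx F q \<noteq> 0"
    and der: "\<And>w. w \<in> W \<Longrightarrow> (\<psi> has_derivative
      (\<lambda>k. (inverse (dx F (\<psi> w)) * (fst k - snd k * dy F (\<psi> w)), snd k))) (at w)"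
  shows "smooth_on W \<psi>"
  unfolding smooth_on_def
proof
  fix n
  have "higher_differentiable_on V (\<lambda>q. frechet_derivative F (at q) v) m" for v m
    using assms(1) unfolding smooth_on_def by (metis higher_differentiable_on.simps(2))
  then have dxF: "higher_differentiable_on V (dx F) m" and dyF: "higher_differentiable_on V (dy F) m"
    for m by (simp_all add: dx_def[abs_def] dy_def[abs_def])
  show "higher_differentiable_on W \<psi> n"
  proof (induction n)
    case 0
    have "continuous_on W \<psi>"
      using der by (meson continuous_at_imp_continuous_on has_derivative_continuous)
    then show ?case by simp
  next
    case (Suc n)
    note const = higher_differentiable_on_const[OF assms(3)]
    have open_nonzero: "open (- {0 :: real})" by (simp add: open_Compl)
    have dx\<psi>: "higher_differentiable_on W (\<lambda>w. dx F (\<psi> w)) n"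
      by (rule higher_differentiable_on_compose[OF assms(3,2,4) dxF Suc])
    have dy\<psi>: "higher_differentiable_on W (\<lambda>w. dy F (\<psi> w)) n"
      by (rule higher_differentiable_on_compose[OF assms(3,2,4) dyF Suc])
    have "(\<lambda>w. dx F (\<psi> w)) ` W \<subseteq> - {0}"
    proof (rule image_subsetI)
      fix w assume "w \<in> W"
      then have "\<psi> w \<in> V" using assms(4) by blast
      then show "dx F (\<psi> w) \<in> - {0}" using assms(5) by simp
    qed
    then have inv: "higher_differentiable_on W (\<lambda>w. inverse (dx F (\<psi> w))) n"
      by (rule higher_differentiable_on_compose[OF assms(3) open_nonzero _
            higher_differentiable_on_inverse dx\<psi>])
    show ?case
    proof (rule higher_differentiable_on_SucI[OF assms(3) der])
      fix k :: "real \<times> real"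
      have "higher_differentiable_on W
          (\<lambda>w. inverse (dx F (\<psi> w)) * (fst k - snd k * dy F (\<psi> w))) n"
        by (rule higher_differentiable_on_mult[OF assms(3) inv higher_differentiable_on_diff[OF assms(3)
              const higher_differentiable_on_mult[OF assms(3) const dy\<psi>]]])
      then show "higher_differentiable_on W
          (\<lambda>w. (inverse (dx F (\<psi> w)) * (fst k - snd k * dy F (\<psi> w)), snd k)) n"
        by (rule higher_differentiable_on_Pair[OF assms(3) _ const])
    qed
  qed
qed

lemma diffeo_between_Pair_snd:
  fixes F :: "real \<times> real \<Rightarrow> real"
  assumes "smooth_on V F" "open V" "convex V" "\<And>q. q \<in> V \<Longrightarrow> dx F q \<noteq> 0"
  defines "\<phi> \<equiv> \<lambda>q. (F q, snd q)"
  shows "diffeo_between \<phi> V (\<phi> ` V)"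
proof -
  have smooth_\<phi>: "smooth_on V \<phi>"
    using assms(1,2) unfolding smooth_on_def \<phi>_def
    by (auto intro: higher_differentiable_on_Pair higher_differentiable_on_bounded_linear
        bounded_linear_snd)
  have differentiable: "F differentiable (at q)" if "q \<in> V" for q
    using assms(1,2) that unfolding smooth_on_def
    by (metis differentiable_on_eq_differentiable_at higher_differentiable_on.simps(2))
  have cont: "continuous_on V \<phi>"
    using smooth_\<phi> unfolding smooth_on_def by (metis higher_differentiable_on.simps(1))
  have inj: "inj_on \<phi> V"
    unfolding \<phi>_def using inj_on_Pair_snd[OF assms(3) differentiable assms(4)] .
  define \<psi> where "\<psi> = the_inv_into V \<phi>"
  have open_image: "open (\<phi> ` V)" by (rule invariance_of_domain[OF cont assms(2) inj])
  have \<psi>_into: "\<psi> ` \<phi> ` V \<subseteq> V" and \<psi>_\<phi>: "\<And>q. q \<in> V \<Longrightarrow> \<psi> (\<phi> q) = q"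
    and \<phi>_\<psi>: "\<And>w. w \<in> \<phi> ` V \<Longrightarrow> \<phi> (\<psi> w) = w"
    using inj by (auto simp: \<psi>_def the_inv_into_f_f f_the_inv_into_f)
  have "smooth_on (\<phi> ` V) \<psi>"
  proof (rule smooth_on_inverse_Pair_snd[OF assms(1,2) open_image \<psi>_into assms(4)])
    fix w assume w: "w \<in> \<phi> ` V"
    then have "\<psi> w \<in> V" using \<psi>_into by blast
    show "(\<psi> has_derivative
        (\<lambda>k. (inverse (dx F (\<psi> w)) * (fst k - snd k * dy F (\<psi> w)), snd k))) (at w)"
      by (rule has_derivative_inverse_Pair_snd[OF assms(2) cont[unfolded \<phi>_def]
            \<psi>_\<phi>[unfolded \<phi>_def] \<open>\<psi> w \<in> V\<close> \<phi>_\<psi>[OF w, unfolded \<phi>_def]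
            differentiable[OF \<open>\<psi> w \<in> V\<close>] assms(4)[OF \<open>\<psi> w \<in> V\<close>]])
  qed
  then have "\<exists>\<psi>. smooth_on (\<phi> ` V) \<psi> \<and> (\<forall>q\<in>V. \<psi> (\<phi> q) = q) \<and> (\<forall>w\<in>\<phi> ` V. \<phi> (\<psi> w) = w)"
    using \<psi>_\<phi> \<phi>_\<psi> by blast
  with assms(2) open_image smooth_\<phi> show ?thesis
    unfolding diffeo_between_def by blast
qed

lemma image_subset_line:
  assumes "v \<noteq> 0" "\<And>q. q \<in> S \<Longrightarrow> \<phi> q = p + h q *\<^sub>R v"
  shows "\<exists>L. is_line L \<and> \<phi> ` S \<subseteq> L"
proof (intro exI conjI)
  show "is_line {p + t *\<^sub>R v | t. True}"
    unfolding is_line_def using assms(1) by blast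
  show "\<phi> ` S \<subseteq> {p + t *\<^sub>R v | t. True}"
    using assms(2) by blast
qed

lemma smooth_on_fibrewise_affine:
  fixes a b :: "real \<Rightarrow> real"
  assumes "smooth_on UNIV a" "smooth_on UNIV b"
  shows "smooth_on UNIV (\<lambda>(x, y). a x * x + b x * y)"
  unfolding smooth_on_def
proof
  fix n
  note linear = higher_differentiable_on_bounded_linear[OF open_UNIV]
  have fst_compose: "higher_differentiable_on UNIV (\<lambda>q :: real \<times> real. c (fst q)) n"
    if "smooth_on UNIV c" for c :: "real \<Rightarrow> real"
    using that unfolding smooth_on_def
    by (intro higher_differentiable_on_compose[where f=fst and h=c, OF open_UNIV open_UNIV subset_UNIV]
        linear[OF bounded_linear_fst]) simp
  have "higher_differentiable_on UNIV (\<lambda>q. a (fst q) * fst q + b (fst q) * snd q) n"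
    by (rule higher_differentiable_on_add[OF open_UNIV
          higher_differentiable_on_mult[OF open_UNIV fst_compose[OF assms(1)] linear[OF bounded_linear_fst]]
          higher_differentiable_on_mult[OF open_UNIV fst_compose[OF assms(2)] linear[OF bounded_linear_snd]]])
  then show "higher_differentiable_on UNIV (\<lambda>(x, y). a x * x + b x * y) n"
    by (simp add: case_prod_beta')
qed

theorem mainTheorem2:
  fixes a b :: "real \<Rightarrow> real" and U :: "(real \<times> real) set"
  assumes "smooth_on UNIV a" and "smooth_on UNIV b"
    and "three_web U fst snd (\<lambda>(x, y). a x * x + b x * y)"
  shows "linearizable_web U fst snd (\<lambda>(x, y). a x * x + b x * y)"
proof -
  define F where "F = (\<lambda>(x :: real, y :: real). a x * x + b x * y)"
  define \<phi> where "\<phi> = (\<lambda>q. (F q, snd q))"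
  have "open U" and transversal: "\<And>q. q \<in> U \<Longrightarrow> transversal_at snd F q"
    using assms(3) unfolding three_web_def F_def by simp_all
  have smooth: "smooth_on UNIV F"
    unfolding F_def by (rule smooth_on_fibrewise_affine[OF assms(1,2)])
  have "\<exists>V W \<phi>. p \<in> V \<and> V \<subseteq> U \<and> diffeo_between \<phi> V W \<and>
      (\<forall>g\<in>{fst, snd, F}. \<forall>c. \<exists>L. is_line L \<and> \<phi> ` {q \<in> V. g q = c} \<subseteq> L)" if "p \<in> U" for p
  proof -
    obtain r where r: "r > 0" "ball p r \<subseteq> U"
      using \<open>open U\<close> \<open>p \<in> U\<close> open_contains_ball by blast
    have "smooth_on (ball p r) F"
      using smooth higher_differentiable_on_subset[OF subset_UNIV] unfolding smooth_on_def by blast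
    moreover have "dx F q \<noteq> 0" if "q \<in> ball p r" for q
      using transversal[of q] r(2) that unfolding transversal_at_def by (auto simp: dx_snd dy_snd)
    ultimately have "diffeo_between \<phi> (ball p r) (\<phi> ` ball p r)"
      unfolding \<phi>_def by (rule diffeo_between_Pair_snd[OF _ open_ball convex_ball])
    moreover have "\<exists>L. is_line L \<and> \<phi> ` {q \<in> ball p r. g q = c} \<subseteq> L" if "g \<in> {fst, snd, F}" for g c
      using that
    proof (elim insertE emptyE)
      assume "g = fst"
      then show ?thesis
        by (intro image_subset_line[where p="(a c * c, 0)" and v="(b c, 1)" and h=snd])
          (auto simp: \<phi>_def F_def zero_prod_def)
    next
      assume "g = snd"
      then show ?thesis
        by (intro image_subset_line[where p="(0, c)" and v="(1, 0)" and h=F])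
          (auto simp: \<phi>_def zero_prod_def)
    next
      assume "g = F"
      then show ?thesis
        by (intro image_subset_line[where p="(c, 0)" and v="(0, 1)" and h=snd])
          (auto simp: \<phi>_def zero_prod_def)
    qed
    ultimately have "p \<in> ball p r \<and> ball p r \<subseteq> U \<and> diffeo_between \<phi> (ball p r) (\<phi> ` ball p r) \<and>
        (\<forall>g\<in>{fst, snd, F}. \<forall>c. \<exists>L. is_line L \<and> \<phi> ` {q \<in> ball p r. g q = c} \<subseteq> L)"
      using r by simp
    then show ?thesis by blast
  qed
  then show ?thesis
    unfolding linearizable_web_def F_def[symmetric] by blast
qed

end
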